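(* Let $\alpha\in(0,1)$, $m=\alpha n$, $c\in\mathbb{N}$, $q=2^{m+c}$. Then for all $\gamma>1$ and $k\ge 3.6-\frac54\log_2\alpha$, setting $f=\frac{k\ln m}{m}$, there exists $N_k>0$ such that for all $n\ge N_k$, $\epsilon(n,m,q,f)\le\gamma\frac{2^c}{q-1}$.
   Context: For $q\ge2$: $w^*(n,q)=\max\{w\ge0:\sum_{j=1}^w\binom{n}{j}\le q-1\}$, $r(n,q)=q-1-\sum_{w=1}^{w^*(n,q)}\binom{n}{w}$, and $$\epsilon(n,m,q,f)=\frac{1}{q-1}\left[\sum_{w=1}^{w^*(n,q)}\binom{n}{w}\frac{1}{2^m}(1+(1-2f)^w)^m+\frac{r(n,q)}{2^m}(1+(1-2f)^{w^*(n,q)+1})^m\right].$$ $\ln$ is the natural logarithm. *)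

theory Defs
  imports Complex_Main
begin

definition wstar :: "nat \<Rightarrow> nat \<Rightarrow> nat" where
  "wstar n q = (GREATEST w. (\<Sum>j=1..w. n choose j) \<le> q - 1)"

definition rr :: "nat \<Rightarrow> nat \<Rightarrow> nat" where
  "rr n q = q - 1 - (\<Sum>w=1..wstar n q. n choose w)"

definition eps :: "nat \<Rightarrow> nat \<Rightarrow> nat \<Rightarrow> real \<Rightarrow> real" where
  "eps n m q f = (1 / (real q - 1)) *
     ((\<Sum>w=1..wstar n q. real (n choose w) * (1 / 2 ^ m) * (1 + (1 - 2 * f) ^ w) ^ m)
      + real (rr n q) / 2 ^ m * (1 + (1 - 2 * f) ^ (wstar n q + 1)) ^ m)"

end

(*
  Split the sum defining eps at W = ceil(delta m). The binomial weights of the first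
  wstar + 1 summands add up to q - 1 and the summand (1 + (1 - 2f)^w)^m / 2^m decreases
  in w, so the summands with w >= W contribute at most (q - 1) times the W-th one, which
  is at most 2^c exp(m^(1 - 2 k delta)) and hence close to 2^c once 2 k delta > 1.
  Each summand with w < W is small in one of three regimes: for 2 f w <= 1 it is at most
  (m^(1 - k/2) / alpha)^w, a geometric series; for w <= theta m the entropy bound
  C(n,w) <= exp(m/8) is beaten by the factor exp(-m/4); for theta m < w < delta m the
  entropy bound C(n,w) <= exp((1/2 - s) m), with a slack s > 0, is beaten by
  exp(-(1 - s) m / 2).
  The hypothesis on k is what makes such a cutoff delta > 1/(2k) with
  delta (1 - ln alpha - ln delta) < 1/2 available.
*)
theory Submission
  imports Defs "HOL-Real_Asymp.Real_Asymp"
begin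

lemma power_div_fact_le_exp:
  fixes x :: real
  assumes "0 \<le> x"
  shows "x ^ n / fact n \<le> exp x"
proof -
  have s: "(\<lambda>n. x ^ n /\<^sub>R fact n) sums exp x" by (rule exp_converges)
  have "sum (\<lambda>n. x ^ n /\<^sub>R fact n) {n} \<le> suminf (\<lambda>n. x ^ n /\<^sub>R fact n)"
    by (rule sum_le_suminf) (use s assms in \<open>auto simp: sums_iff\<close>)
  then show ?thesis using s by (simp add: sums_iff divide_inverse mult.commute)
qed

lemma binomial_le_exp:
  assumes "1 \<le> w" "0 < n"
  shows "real (n choose w) \<le> exp (real w * (1 + ln (real n) - ln (real w)))"
proof -
  have w0: "0 < real w" using assms by simp
  have "real (n choose w) * fact w \<le> real n ^ w"
    by (metis binomial_fact_pow of_nat_fact of_nat_le_iff of_nat_mult of_nat_power)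
  hence "real (n choose w) \<le> real n ^ w / fact w"
    by (simp add: field_simps)
  also have "\<dots> \<le> real n ^ w / (real w ^ w / exp (real w))"
    using power_div_fact_le_exp[of "real w" w] w0
    by (intro divide_left_mono) (auto simp: field_simps)
  also have "\<dots> = exp (real w * ln (real n)) * exp (real w) / exp (real w * ln (real w))"
    using assms w0 by (simp add: exp_of_nat_mult field_simps)
  also have "\<dots> = exp (real w * (1 + ln (real n) - ln (real w)))"
    by (simp add: exp_add[symmetric] exp_diff[symmetric] algebra_simps)
  finally show ?thesis .
qed

lemma mult_one_plus_ln_ratio_mono:
  fixes s t n :: real
  assumes "0 < s" "s \<le> t" "t \<le> n"
  shows "s * (1 + ln n - ln s) \<le> t * (1 + ln n - ln t)"
proof -
  have "ln t - ln s \<le> t / s - 1"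
    using ln_le_minus_one[of "t / s"] assms by (simp add: ln_div)
  hence "s * (ln t - ln s) \<le> t - s"
    using assms by (simp add: field_simps)
  moreover have "(t - s) * ln t \<le> (t - s) * ln n"
    using assms by (intro mult_left_mono) auto
  ultimately show ?thesis by (simp add: algebra_simps)
qed

lemma binomial_le_exp_fraction:
  fixes t :: real
  assumes "1 \<le> w" "real w \<le> t" "t \<le> real n"
  shows "real (n choose w) \<le> exp (t * (1 + ln (real n) - ln t))"
proof -
  have "real (n choose w) \<le> exp (real w * (1 + ln (real n) - ln (real w)))"
    using assms by (intro binomial_le_exp) auto
  also have "\<dots> \<le> exp (t * (1 + ln (real n) - ln t))"
    using assms by (simp add: mult_one_plus_ln_ratio_mono)
  finally show ?thesis .
qed

lemma one_minus_power_le_exp: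
  fixes t :: real
  assumes "0 \<le> t" "t \<le> 1"
  shows "(1 - t) ^ w \<le> exp (- t * real w)"
proof -
  have "(1 - t) ^ w \<le> exp (- t) ^ w"
    using assms exp_ge_add_one_self[of "- t"] by (intro power_mono) auto
  then show ?thesis by (simp add: exp_of_nat_mult[symmetric] mult.commute)
qed

lemma exp_neg_le_one_minus_half:
  fixes u :: real
  assumes "0 \<le> u" "u \<le> 1"
  shows "exp (- u) \<le> 1 - u / 2"
proof -
  have "1 \<le> (1 + u) * (1 - u / 2)"
    using assms by (simp add: algebra_simps mult_left_le_one_le)
  also have "\<dots> \<le> exp u * (1 - u / 2)"
    using assms by (intro mult_right_mono) auto
  finally show ?thesis by (simp add: exp_minus field_simps)
qed

lemma geometric_sum_le_twice:
  fixes \<rho> :: real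
  assumes "0 \<le> \<rho>" "\<rho> \<le> 1/2"
  shows "(\<Sum>w\<in>{1..<W}. \<rho> ^ w) \<le> 2 * \<rho>"
proof -
  have "(\<Sum>w\<in>{1..<W}. \<rho> ^ w) \<le> (\<Sum>w\<in>{1..<Suc W}. \<rho> ^ w)"
    using assms by (intro sum_mono2) auto
  also have "\<dots> = \<rho> * (\<Sum>i<W. \<rho> ^ i)"
    using sum.shift_bounds_Suc_ivl[of "\<lambda>w. \<rho> ^ w" 0 W]
    by (simp add: lessThan_atLeast0 sum_distrib_left)
  also have "(\<Sum>i<W. \<rho> ^ i) = (1 - \<rho> ^ W) / (1 - \<rho>)"
    using assms by (simp add: sum_gp_strict)
  also have "\<dots> \<le> 1 / (1 - \<rho>)"
    using assms by (simp add: divide_right_mono)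
  also have "\<dots> \<le> 2"
    using assms by (simp add: field_simps)
  finally show ?thesis using assms by (simp add: mult_left_mono)
qed

lemma sum_choose_bounded_by:
  fixes n q y :: nat
  assumes "0 < q" "q < 2 ^ n" "(\<Sum>j=1..y. n choose j) \<le> q - 1"
  shows "y \<le> n"
proof (rule ccontr)
  assume "\<not> y \<le> n"
  hence "(\<Sum>j=1..n. n choose j) \<le> (\<Sum>j=1..y. n choose j)"
    by (intro sum_mono2) auto
  moreover have "(\<Sum>j=1..n. n choose j) = 2 ^ n - 1"
    using choose_row_sum[of n] by (simp add: atMost_atLeast0 sum.atLeast_Suc_atMost)
  ultimately have "2 ^ n - 1 \<le> q - 1"
    using assms(3) by linarith
  then show False
    using assms(1,2) by linarith
qed

lemma
  fixes n q :: nat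
  assumes "0 < q" "q < 2 ^ n"
  shows sum_choose_wstar_le: "(\<Sum>j=1..wstar n q. n choose j) \<le> q - 1"
    and sum_choose_Suc_wstar_gt: "q - 1 < (\<Sum>j=1..wstar n q + 1. n choose j)"
proof -
  let ?P = "\<lambda>w. (\<Sum>j=1..w. n choose j) \<le> q - 1"
  have bounded: "\<And>y. ?P y \<Longrightarrow> y \<le> n"
    using sum_choose_bounded_by[OF assms] .
  show "?P (wstar n q)"
    unfolding wstar_def by (rule GreatestI_nat[of ?P 0 n]) (auto simp: bounded)
  have "\<not> ?P (wstar n q + 1)"
    using Greatest_le_nat[of ?P _ n] bounded unfolding wstar_def by fastforce
  then show "q - 1 < (\<Sum>j=1..wstar n q + 1. n choose j)" by simp
qed

lemma rr_le_choose_Suc_wstar: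
  assumes "0 < q" "q < 2 ^ n"
  shows "rr n q \<le> n choose (wstar n q + 1)"
  using sum_choose_Suc_wstar_gt[OF assms] by (simp add: rr_def)

definition eps_weight :: "nat \<Rightarrow> real \<Rightarrow> nat \<Rightarrow> real" where
  "eps_weight m f w = (1 + (1 - 2 * f) ^ w) ^ m / 2 ^ m"

lemma eps_eq_eps_weight:
  "eps n m q f =
     ((\<Sum>w=1..wstar n q. real (n choose w) * eps_weight m f w)
      + real (rr n q) * eps_weight m f (wstar n q + 1)) / (real q - 1)"
  by (simp add: eps_def eps_weight_def)

lemma eps_weight_nonneg:
  assumes "0 \<le> f" "f \<le> 1/2"
  shows "0 \<le> eps_weight m f w"
  using assms by (simp add: eps_weight_def)

lemma eps_weight_antimono:
  assumes "0 \<le> f" "f \<le> 1/2" "v \<le> w"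
  shows "eps_weight m f w \<le> eps_weight m f v"
proof -
  have "(1 - 2 * f) ^ w \<le> (1 - 2 * f) ^ v"
    using assms by (intro power_decreasing) auto
  then show ?thesis
    using assms unfolding eps_weight_def by (intro divide_right_mono power_mono) auto
qed

lemma weighted_sum_le_head_tail:
  fixes C g :: "nat \<Rightarrow> real" and r :: real
  assumes g0: "\<And>w. 0 \<le> g w" and g_antimono: "\<And>v w. v \<le> w \<Longrightarrow> g w \<le> g v"
    and C0: "\<And>w. 0 \<le> C w" and r0: "0 \<le> r" and rC: "r \<le> C (s + 1)"
  shows "(\<Sum>w=1..s. C w * g w) + r * g (s + 1)
     \<le> (\<Sum>w\<in>{1..<W}. C w * g w) + ((\<Sum>w=1..s. C w) + r) * g W"
proof -
  define h where "h w = (if w < W then C w * g w else 0)" for w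
  have t: "C w * g w \<le> C w * g W + h w" for w
    using C0 g0 g_antimono[of W w] by (cases "w < W") (simp_all add: h_def mult_left_mono)
  have tr: "r * g (s + 1) \<le> r * g W + h (s + 1)"
    using C0 g0 rC r0 g_antimono[of W "s + 1"]
    by (cases "s + 1 < W") (simp_all add: h_def mult_right_mono mult_left_mono add_increasing)
  have "(\<Sum>w=1..s. C w * g w) \<le> (\<Sum>w=1..s. C w) * g W + (\<Sum>w=1..s. h w)"
    using sum_mono[of "{1..s}" "\<lambda>w. C w * g w" "\<lambda>w. C w * g W + h w", OF t]
    by (simp add: sum.distrib sum_distrib_right)
  moreover have "(\<Sum>w=1..s. h w) + h (s + 1) \<le> (\<Sum>w\<in>{1..<W}. C w * g w)"
  proof -
    have "(\<Sum>w=1..s. h w) + h (s + 1) = (\<Sum>w\<in>{1..s + 1} \<inter> {..<W}. C w * g w)"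
      unfolding h_def by (simp add: sum.inter_restrict)
    also have "\<dots> \<le> (\<Sum>w\<in>{1..<W}. C w * g w)"
      by (rule sum_mono2) (use C0 g0 in auto)
    finally show ?thesis .
  qed
  ultimately show ?thesis using tr by (simp add: algebra_simps)
qed

lemma eps_le_head_tail:
  assumes "0 < q" "q < 2 ^ n" "0 \<le> f" "f \<le> 1/2"
  shows "eps n m q f \<le>
    ((\<Sum>w\<in>{1..<W}. real (n choose w) * eps_weight m f w)
     + (real q - 1) * eps_weight m f W) / (real q - 1)"
proof -
  let ?s = "wstar n q"
  have "real (rr n q) = real q - 1 - (\<Sum>w=1..?s. real (n choose w))"
    using sum_choose_wstar_le[OF assms(1,2)] assms(1)
    by (simp add: rr_def of_nat_diff flip: of_nat_sum)
  moreover have "(\<Sum>w=1..?s. real (n choose w) * eps_weight m f w)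
        + real (rr n q) * eps_weight m f (?s + 1)
      \<le> (\<Sum>w\<in>{1..<W}. real (n choose w) * eps_weight m f w)
        + ((\<Sum>w=1..?s. real (n choose w)) + real (rr n q)) * eps_weight m f W"
    using assms rr_le_choose_Suc_wstar[OF assms(1,2)]
    by (intro weighted_sum_le_head_tail) (auto intro: eps_weight_nonneg eps_weight_antimono)
  ultimately show ?thesis
    using assms(1) unfolding eps_eq_eps_weight by (simp add: divide_right_mono)
qed

lemma eps_weight_le_exp:
  assumes "0 \<le> f" "f \<le> 1/2"
  shows "eps_weight m f w \<le> exp (- real m * (1 - (1 - 2 * f) ^ w) / 2)"
proof -
  let ?y = "(1 - 2 * f) ^ w"
  have "(1 + ?y) / 2 \<le> exp (- (1 - ?y) / 2)"
    using exp_ge_add_one_self[of "- (1 - ?y) / 2"] by (simp add: field_simps)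
  hence "((1 + ?y) / 2) ^ m \<le> exp (- (1 - ?y) / 2) ^ m"
    using assms by (intro power_mono) auto
  then show ?thesis
    by (simp add: eps_weight_def power_divide exp_of_nat_mult[symmetric] algebra_simps)
qed

lemma eps_weight_le_exp_light:
  assumes "0 \<le> f" "f \<le> 1/2" "2 * f * real w \<le> 1"
  shows "eps_weight m f w \<le> exp (- (real m * f * real w) / 2)"
proof -
  have "exp (- (2 * f * real w)) \<le> 1 - f * real w"
    using exp_neg_le_one_minus_half[of "2 * f * real w"] assms by simp
  hence "f * real w \<le> 1 - (1 - 2 * f) ^ w"
    using one_minus_power_le_exp[of "2 * f" w] assms by (simp add: mult.assoc)
  hence "real m * (f * real w) \<le> real m * (1 - (1 - 2 * f) ^ w)"
    by (intro mult_left_mono) auto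
  hence "exp (- real m * (1 - (1 - 2 * f) ^ w) / 2) \<le> exp (- (real m * f * real w) / 2)"
    by (simp add: algebra_simps)
  with eps_weight_le_exp[OF assms(1,2), of m w] show ?thesis
    by linarith
qed

lemma eps_weight_le_exp_heavy:
  assumes "0 \<le> f" "f \<le> 1/2" "1 \<le> 2 * f * real w"
  shows "eps_weight m f w \<le> exp (- real m / 4)"
proof -
  have "(1 - 2 * f) ^ w \<le> exp (- (2 * f * real w))"
    using one_minus_power_le_exp[of "2 * f" w] assms by simp
  also have "\<dots> \<le> exp (- 1)"
    using assms by simp
  also have "exp (- 1) \<le> (1/2 :: real)"
    using exp_ge_add_one_self[of 1] by (simp add: exp_minus field_simps)
  finally have "real m * (1/2) \<le> real m * (1 - (1 - 2 * f) ^ w)"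
    by (intro mult_left_mono) auto
  hence "exp (- real m * (1 - (1 - 2 * f) ^ w) / 2) \<le> exp (- real m / 4)"
    by (simp add: algebra_simps)
  with eps_weight_le_exp[OF assms(1,2), of m w] show ?thesis
    by linarith
qed

lemma eps_weight_tail_le:
  assumes "0 \<le> f" "f \<le> 1/2"
  shows "(real ((2::nat) ^ (m + c)) - 1) * eps_weight m f W
    \<le> 2 ^ c * exp (real m * (1 - 2 * f) ^ W)"
proof -
  let ?y = "(1 - 2 * f) ^ W"
  have "(real ((2::nat) ^ (m + c)) - 1) * eps_weight m f W
      = (real ((2::nat) ^ (m + c)) - 1) / 2 ^ m * (1 + ?y) ^ m"
    by (simp add: eps_weight_def)
  also have "\<dots> \<le> 2 ^ c * exp ?y ^ m"
    using assms by (intro mult_mono power_mono) (simp_all add: power_add field_simps)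
  also have "exp ?y ^ m = exp (real m * ?y)"
    by (simp add: exp_of_nat_mult)
  finally show ?thesis .
qed

lemma ln_sub_self_antimono:
  fixes x y :: real
  assumes "1 \<le> x" "x \<le> y"
  shows "ln y - y \<le> ln x - x"
proof -
  have "ln y - ln x \<le> y / x - 1"
    using ln_le_minus_one[of "y / x"] assms by (simp add: ln_div)
  also have "\<dots> = (y - x) / x"
    using assms by (simp add: field_simps)
  also have "\<dots> \<le> (y - x) / 1"
    using assms by (intro divide_left_mono) auto
  finally show ?thesis by simp
qed

lemma ln_2_lt: "ln 2 < (0.8 :: real)" and ln_7_2_lt: "ln 7.2 < (2.6 :: real)"
proof -
  have "2 < (1 + 0.8 / real 4) ^ 4"
    by (simp add: power4_eq_xxxx)
  also have "\<dots> \<le> exp 0.8"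
    by (rule exp_ge_one_plus_x_over_n_power_n) auto
  finally show "ln 2 < (0.8 :: real)"
    using ln_less_cancel_iff[of 2 "exp 0.8"] by simp
  have "7.2 < (1 + 2.6 / real 4) ^ 4"
    by (simp add: power4_eq_xxxx)
  also have "\<dots> \<le> exp 2.6"
    by (rule exp_ge_one_plus_x_over_n_power_n) auto
  finally show "ln 7.2 < (2.6 :: real)"
    using ln_less_cancel_iff[of "7.2" "exp 2.6"] by simp
qed

lemma entropy_threshold_lt:
  fixes \<alpha> k :: real
  assumes "0 < \<alpha>" "\<alpha> < 1" "3.6 - 5/4 * log 2 \<alpha> \<le> k"
  shows "ln 2 + 1 + ln k - ln \<alpha> < k" and "3.6 \<le> k"
proof -
  define a where "a = - ln \<alpha>"
  define k0 where "k0 = 3.6 + 25/16 * a" \<comment> \<open>5/4 divided by the bound 0.8 on ln 2\<close>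
  have a0: "0 < a" using assms by (simp add: a_def)
  have "a / 0.8 \<le> a / ln 2"
    using a0 ln_2_lt by (intro divide_left_mono) auto
  with assms(3) have "k0 \<le> k"
    by (simp add: k0_def a_def log_def)
  moreover have "3.6 \<le> k0" using a0 by (simp add: k0_def)
  ultimately show "3.6 \<le> k" by linarith
  have "ln k - k \<le> ln k0 - k0"
    using \<open>k0 \<le> k\<close> \<open>3.6 \<le> k0\<close> by (intro ln_sub_self_antimono) auto
  moreover have "ln k0 \<le> ln 3.6 + 5/18 * k0 - 1"
  proof -
    have "ln (k0 / 3.6) = ln k0 - ln 3.6"
      using \<open>3.6 \<le> k0\<close> by (intro ln_divide_pos) auto
    moreover have "ln (k0 / 3.6) \<le> 5/18 * k0 - 1"
      using ln_le_minus_one[of "k0 / 3.6"] \<open>3.6 \<le> k0\<close> by simp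
    ultimately show ?thesis by linarith
  qed
  moreover have "ln 2 + ln 3.6 < (2.6 :: real)"
    using ln_7_2_lt ln_mult[of "2::real" "3.6"] by simp
  ultimately show "ln 2 + 1 + ln k - ln \<alpha> < k"
    using a0 k0_def a_def by linarith
qed

lemma exists_fraction_entropy_le:
  fixes a b :: real
  assumes "0 < b"
  shows "\<exists>\<theta>>0. \<theta> \<le> 1 \<and> \<theta> * (1 + a - ln \<theta>) \<le> b"
proof -
  have "((\<lambda>t. t * (1 + a - ln t)) \<longlongrightarrow> 0) (at_right 0)"
    by real_asymp
  hence "eventually (\<lambda>t. t * (1 + a - ln t) < b) (at_right 0)"
    using assms by (rule order_tendstoD)
  moreover have "eventually (\<lambda>t. t \<le> 1) (at_right (0::real))"
    by real_asymp
  moreover note eventually_at_right_less[of "0::real"]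
  ultimately have "eventually (\<lambda>t. 0 < t \<and> t \<le> 1 \<and> t * (1 + a - ln t) \<le> b) (at_right 0)"
    by eventually_elim auto
  then show ?thesis
    using eventually_happens[of _ "at_right (0::real)"] by force
qed

lemma exists_cutoff_fraction:
  fixes a k :: real
  assumes "0 \<le> a" "1 < k" "ln 2 + 1 + ln k + a < k"
  shows "\<exists>\<delta> \<epsilon>. 0 < \<delta> \<and> \<delta> \<le> 1/2 \<and> 1 < 2 * k * \<delta> \<and> 0 < \<epsilon>
    \<and> \<delta> * (1 + a - ln \<delta>) \<le> 1/2 - \<epsilon>"
proof -
  define l where "l = ln 2 + 1 + ln k + a"
  \<comment> \<open>the midpoint of 1/(2k) and 1/(2l): then ln(2 k \<delta>) \<ge> 0 and \<delta> l = 1/2 - \<epsilon>\<close>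
  define \<delta> where "\<delta> = (k + l) / (4 * k * l)"
  define \<epsilon> where "\<epsilon> = (k - l) / (4 * k)"
  have l1: "1 \<le> l" and lk: "l < k"
    using assms by (auto simp: l_def)
  have \<delta>0: "0 < \<delta>" and \<epsilon>0: "0 < \<epsilon>"
    using l1 lk assms by (auto simp: \<delta>_def \<epsilon>_def)
  have "0 \<le> k * (l - 1) + l * (k - 1)"
    using l1 assms by (intro add_nonneg_nonneg mult_nonneg_nonneg) auto
  hence "\<delta> \<le> 1/2"
    using l1 assms unfolding \<delta>_def by (simp add: field_simps algebra_simps)
  moreover have two_k_\<delta>: "1 < 2 * k * \<delta>"
    using l1 lk assms by (simp add: \<delta>_def field_simps)
  moreover have "\<delta> * (1 + a - ln \<delta>) \<le> 1/2 - \<epsilon>"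
  proof -
    have "0 \<le> ln (2 * k * \<delta>)"
      using two_k_\<delta> by simp
    hence "1 + a - ln \<delta> \<le> l"
      using assms \<delta>0 by (simp add: l_def ln_mult)
    hence "\<delta> * (1 + a - ln \<delta>) \<le> \<delta> * l"
      using \<delta>0 by (intro mult_left_mono) auto
    also have "\<delta> * l = 1/2 - \<epsilon>"
      using l1 assms by (simp add: \<delta>_def \<epsilon>_def field_simps)
    finally show ?thesis .
  qed
  ultimately show ?thesis
    using \<delta>0 \<epsilon>0 by blast
qed

lemma binomial_le_exp_scaled:
  fixes \<alpha> \<beta> :: real
  assumes "0 < \<alpha>" "\<alpha> \<le> 1" "0 < \<beta>" "\<beta> \<le> 1" "real m = \<alpha> * real n"
    and "1 \<le> w" "real w \<le> \<beta> * real m"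
  shows "real (n choose w) \<le> exp (real m * (\<beta> * (1 - ln \<alpha> - ln \<beta>)))"
proof -
  have "0 < \<beta> * real m" using assms by linarith
  hence m0: "0 < real m" using assms(3) by (simp add: zero_less_mult_iff)
  have n_eq: "real n = real m / \<alpha>" using assms(1,5) by simp
  have "\<beta> * real m \<le> real m"
    using assms m0 by (simp add: mult_left_le_one_le)
  also have "real m \<le> real n"
    using assms by (simp add: mult_left_le_one_le)
  finally have "\<beta> * real m \<le> real n" .
  hence "real (n choose w) \<le> exp (\<beta> * real m * (1 + ln (real n) - ln (\<beta> * real m)))"
    using assms by (intro binomial_le_exp_fraction) auto
  also have "\<beta> * real m * (1 + ln (real n) - ln (\<beta> * real m))
      = real m * (\<beta> * (1 - ln \<alpha> - ln \<beta>))"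
    using assms m0 by (simp add: n_eq ln_mult ln_divide_pos algebra_simps)
  finally show ?thesis .
qed

locale eps_parameters =
  fixes \<alpha> k \<gamma> \<theta> \<delta> \<epsilon> :: real
  assumes alpha: "0 < \<alpha>" "\<alpha> < 1"
    and gamma: "1 < \<gamma>"
    and k_gt_2: "2 < k"
    and theta: "0 < \<theta>" "\<theta> \<le> 1" "\<theta> * (1 - ln \<alpha> - ln \<theta>) \<le> 1/8"
    and delta: "0 < \<delta>" "\<delta> \<le> 1/2" "1 < 2 * k * \<delta>" "\<delta> * (1 - ln \<alpha> - ln \<delta>) \<le> 1/2 - \<epsilon>"
    and epsilon: "0 < \<epsilon>"
begin

definition density :: "nat \<Rightarrow> real" where
  "density m = k * ln (real m) / real m"

definition large_enough :: "real \<Rightarrow> bool" where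
  "large_enough m \<longleftrightarrow> 1 \<le> m \<and> k * ln m / m < 1/2
     \<and> m powr (1 - k/2) / \<alpha> < 1/2 \<and> m powr (1 - k/2) / \<alpha> < (\<gamma> - 1) / 12
     \<and> m * exp (- m / 8) < (\<gamma> - 1) / 6
     \<and> m powr (1 - 2 * k * \<theta>) < \<epsilon> * m
     \<and> m * exp (- \<epsilon> * m / 2) < (\<gamma> - 1) / 6
     \<and> exp (m powr (1 - 2 * k * \<delta>)) < (1 + \<gamma>) / 2"

lemma eventually_large_enough: "eventually large_enough at_top"
proof -
  have powr_lt: "eventually (\<lambda>m::real. m powr s < \<epsilon> * m) at_top" if "s < 1" for s
    using that epsilon by real_asymp
  have density_small: "eventually (\<lambda>m::real. k * ln m / m < 1/2) at_top"
    using k_gt_2 by real_asymp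
  have ratio_small: "eventually (\<lambda>m::real. m powr (1 - k/2) / \<alpha> < c) at_top" if "0 < c" for c
    using k_gt_2 alpha that by real_asymp
  have "eventually (\<lambda>m::real. m * exp (- m / 8) < (\<gamma> - 1) / 6) at_top"
    and "eventually (\<lambda>m::real. m * exp (- \<epsilon> * m / 2) < (\<gamma> - 1) / 6) at_top"
    and "eventually (\<lambda>m::real. exp (m powr (1 - 2 * k * \<delta>)) < (1 + \<gamma>) / 2) at_top"
    using gamma epsilon delta by real_asymp+
  moreover have "1 - 2 * k * \<theta> < 1"
    using k_gt_2 theta by simp
  ultimately show ?thesis
    unfolding large_enough_def using gamma
    by (intro eventually_conj eventually_ge_at_top density_small ratio_small powr_lt) auto
qed

lemma large_enough_density:
  assumes "large_enough (real m)"
  shows "0 \<le> density m" "density m \<le> 1/2" "density m * real m = k * ln (real m)"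
  using assms k_gt_2 by (auto simp: large_enough_def density_def)

lemma power_density_le:
  assumes "large_enough (real m)" "0 \<le> \<beta>" "\<beta> * real m \<le> real w"
  shows "real m * (1 - 2 * density m) ^ w \<le> real m powr (1 - 2 * k * \<beta>)"
proof -
  note f = large_enough_density[OF assms(1)]
  have m0: "0 < real m" using assms(1) by (simp add: large_enough_def)
  have "(1 - 2 * density m) ^ w \<le> exp (- (2 * density m) * real w)"
    using f by (intro one_minus_power_le_exp) auto
  also have "\<dots> \<le> exp (- (2 * density m) * (\<beta> * real m))"
    using f assms by (simp add: mult_left_mono)
  also have "\<dots> = exp (- (2 * k * \<beta>) * ln (real m))"
    using f(3) by (simp add: algebra_simps)
  also have "\<dots> = real m powr (- (2 * k * \<beta>))"
    using m0 by (simp add: powr_def)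
  finally have "real m * (1 - 2 * density m) ^ w \<le> real m * real m powr (- (2 * k * \<beta>))"
    using m0 by simp
  also have "\<dots> = real m powr (1 - 2 * k * \<beta>)"
    by (simp add: powr_mult_base)
  finally show ?thesis .
qed

lemma term_le_light:
  assumes "large_enough (real m)" "real m = \<alpha> * real n" "2 * density m * real w \<le> 1"
  shows "real (n choose w) * eps_weight m (density m) w \<le> (real m powr (1 - k/2) / \<alpha>) ^ w"
proof -
  note f = large_enough_density[OF assms(1)]
  have m0: "0 < real m" using assms(1) by (simp add: large_enough_def)
  have "eps_weight m (density m) w \<le> exp (- (real m * density m * real w) / 2)"
    using f assms(3) by (intro eps_weight_le_exp_light) auto
  also have "\<dots> = exp (real w * (- (k/2) * ln (real m)))"
    using f(3) by (simp add: algebra_simps)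
  also have "\<dots> = exp (- (k/2) * ln (real m)) ^ w"
    by (rule exp_of_nat_mult)
  also have "exp (- (k/2) * ln (real m)) = real m powr (- (k/2))"
    using m0 by (simp add: powr_def)
  finally have weight: "eps_weight m (density m) w \<le> (real m powr (- (k/2))) ^ w" .
  have "real (n choose w) \<le> real n ^ w"
    by (cases "w \<le> n") (simp_all flip: of_nat_power add: binomial_le_pow binomial_eq_0)
  hence "real (n choose w) * eps_weight m (density m) w \<le> real n ^ w * (real m powr (- (k/2))) ^ w"
    using weight f by (intro mult_mono) (auto intro: eps_weight_nonneg)
  also have "\<dots> = (real n * real m powr (- (k/2))) ^ w"
    by (simp add: power_mult_distrib)
  also have "real n * real m powr (- (k/2)) = real m * real m powr (- (k/2)) / \<alpha>"
    using assms(2) alpha by (simp add: field_simps)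
  also have "real m * real m powr (- (k/2)) = real m powr (1 - k/2)"
    by (simp add: powr_mult_base)
  finally show ?thesis .
qed

lemma term_le_heavy:
  assumes "large_enough (real m)" "real m = \<alpha> * real n"
    and "1 \<le> w" "1 \<le> 2 * density m * real w" "real w \<le> \<theta> * real m"
  shows "real (n choose w) * eps_weight m (density m) w \<le> exp (- real m / 8)"
proof -
  note f = large_enough_density[OF assms(1)]
  have "real (n choose w) \<le> exp (real m * (\<theta> * (1 - ln \<alpha> - ln \<theta>)))"
    using alpha theta assms by (intro binomial_le_exp_scaled) auto
  also have "\<dots> \<le> exp (real m / 8)"
    using theta(3) mult_left_mono[OF theta(3), of "real m"] by simp
  finally have "real (n choose w) * eps_weight m (density m) w \<le> exp (real m / 8) * exp (- real m / 4)"
    using f assms(4) by (intro mult_mono eps_weight_le_exp_heavy) (auto intro: eps_weight_nonneg)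
  also have "\<dots> = exp (- real m / 8)"
    by (simp flip: exp_add)
  finally show ?thesis .
qed

lemma term_le_far:
  assumes "large_enough (real m)" "real m = \<alpha> * real n"
    and "\<theta> * real m \<le> real w" "real w \<le> \<delta> * real m"
  shows "real (n choose w) * eps_weight m (density m) w \<le> exp (- \<epsilon> * real m / 2)"
proof -
  note f = large_enough_density[OF assms(1)]
  have m0: "0 < real m" using assms(1) by (simp add: large_enough_def)
  have "0 < \<theta> * real m"
    using theta m0 by simp
  hence "1 \<le> w"
    using assms(3) by simp
  have "real (n choose w) \<le> exp (real m * (\<delta> * (1 - ln \<alpha> - ln \<delta>)))"
    using alpha delta assms \<open>1 \<le> w\<close> by (intro binomial_le_exp_scaled) auto
  also have "\<dots> \<le> exp (real m * (1/2 - \<epsilon>))"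
    using delta(4) m0 by (simp add: mult_left_mono)
  finally have binomial: "real (n choose w) \<le> exp (real m * (1/2 - \<epsilon>))" .
  let ?y = "(1 - 2 * density m) ^ w"
  have "real m * ?y \<le> real m powr (1 - 2 * k * \<theta>)"
    using assms theta by (intro power_density_le) auto
  also have "\<dots> \<le> \<epsilon> * real m"
    using assms(1) by (simp add: large_enough_def)
  finally have "- real m * (1 - ?y) / 2 \<le> - real m / 2 + \<epsilon> * real m / 2"
    by (simp add: field_simps)
  with eps_weight_le_exp[OF f(1,2), of m w]
  have "eps_weight m (density m) w \<le> exp (- real m / 2 + \<epsilon> * real m / 2)"
    by (meson exp_le_cancel_iff order_trans)
  with binomial have "real (n choose w) * eps_weight m (density m) w
      \<le> exp (real m * (1/2 - \<epsilon>)) * exp (- real m / 2 + \<epsilon> * real m / 2)"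
    using f by (intro mult_mono) (auto intro: eps_weight_nonneg)
  also have "\<dots> = exp (- \<epsilon> * real m / 2)"
    by (simp flip: exp_add add: algebra_simps)
  finally show ?thesis .
qed

lemma term_le:
  assumes "large_enough (real m)" "real m = \<alpha> * real n" "1 \<le> w" "real w \<le> \<delta> * real m"
  shows "real (n choose w) * eps_weight m (density m) w
    \<le> (real m powr (1 - k/2) / \<alpha>) ^ w + exp (- real m / 8) + exp (- \<epsilon> * real m / 2)"
proof -
  have pos: "0 \<le> (real m powr (1 - k/2) / \<alpha>) ^ w" "0 < exp (- real m / 8)"
    "0 < exp (- \<epsilon> * real m / 2)"
    using alpha by simp_all
  consider "2 * density m * real w \<le> 1"
    | "1 \<le> 2 * density m * real w" "real w \<le> \<theta> * real m"
    | "\<theta> * real m \<le> real w"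
    by linarith
  then show ?thesis
  proof cases
    case 1
    from term_le_light[OF assms(1,2) this] pos show ?thesis by linarith
  next
    case 2
    from term_le_heavy[OF assms(1-3) this] pos show ?thesis by linarith
  next
    case 3
    from term_le_far[OF assms(1,2) this assms(4)] pos show ?thesis by linarith
  qed
qed

lemma head_le:
  assumes "large_enough (real m)" "real m = \<alpha> * real n"
  shows "(\<Sum>w\<in>{1..<nat \<lceil>\<delta> * real m\<rceil>}. real (n choose w) * eps_weight m (density m) w)
    \<le> (\<gamma> - 1) / 2"
proof -
  define W where "W = nat \<lceil>\<delta> * real m\<rceil>"
  define \<rho> where "\<rho> = real m powr (1 - k/2) / \<alpha>"
  define E where "E = exp (- real m / 8) + exp (- \<epsilon> * real m / 2)"
  have m0: "0 < real m" using assms(1) by (simp add: large_enough_def)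
  have below: "real w \<le> \<delta> * real m" if "w < W" for w
    using that by (simp add: W_def zless_nat_eq_int_zless less_ceiling_iff)
  have "W \<le> m"
    using delta m0 by (simp add: W_def ceiling_le_iff nat_le_iff mult_left_le_one_le)
  have "(\<Sum>w\<in>{1..<W}. real (n choose w) * eps_weight m (density m) w) \<le> (\<Sum>w\<in>{1..<W}. \<rho> ^ w + E)"
    using term_le[OF assms] below by (intro sum_mono) (auto simp: \<rho>_def E_def add.assoc)
  also have "\<dots> = (\<Sum>w\<in>{1..<W}. \<rho> ^ w) + real (W - 1) * E"
    by (simp add: sum.distrib)
  also have "\<dots> \<le> 2 * \<rho> + real m * E"
  proof (intro add_mono geometric_sum_le_twice mult_right_mono)
    show "0 \<le> \<rho>" "\<rho> \<le> 1/2" "0 \<le> E"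
      using assms(1) alpha by (simp_all add: \<rho>_def E_def large_enough_def add_nonneg_nonneg)
    show "real (W - 1) \<le> real m" using \<open>W \<le> m\<close> by simp
  qed
  also have "\<dots> \<le> (\<gamma> - 1) / 2"
    using assms(1) by (simp add: \<rho>_def E_def large_enough_def algebra_simps)
  finally show ?thesis by (simp add: W_def)
qed

lemma tail_le:
  assumes "large_enough (real m)"
  shows "(real ((2::nat) ^ (m + c)) - 1) * eps_weight m (density m) (nat \<lceil>\<delta> * real m\<rceil>)
    \<le> 2 ^ c * ((1 + \<gamma>) / 2)"
proof -
  let ?W = "nat \<lceil>\<delta> * real m\<rceil>"
  note f = large_enough_density[OF assms]
  have "(real ((2::nat) ^ (m + c)) - 1) * eps_weight m (density m) ?W
      \<le> 2 ^ c * exp (real m * (1 - 2 * density m) ^ ?W)"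
    by (rule eps_weight_tail_le[OF f(1,2)])
  also have "\<dots> \<le> 2 ^ c * exp (real m powr (1 - 2 * k * \<delta>))"
    using power_density_le[OF assms, of \<delta> ?W] delta real_nat_ceiling_ge[of "\<delta> * real m"] by simp
  also have "\<dots> \<le> 2 ^ c * ((1 + \<gamma>) / 2)"
    using assms by (simp add: large_enough_def)
  finally show ?thesis .
qed

lemma eps_le:
  assumes "large_enough (real m)" "real m = \<alpha> * real n" "m + c < n"
  shows "eps n m (2 ^ (m + c)) (density m) \<le> \<gamma> * 2 ^ c / (real ((2::nat) ^ (m + c)) - 1)"
proof -
  let ?q = "(2::nat) ^ (m + c)" and ?W = "nat \<lceil>\<delta> * real m\<rceil>"
  have q: "0 < ?q" "?q < 2 ^ n"
    using assms(3) by (simp_all add: power_strict_increasing)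
  have "eps n m ?q (density m)
      \<le> ((\<Sum>w\<in>{1..<?W}. real (n choose w) * eps_weight m (density m) w)
          + (real ?q - 1) * eps_weight m (density m) ?W) / (real ?q - 1)"
    using q large_enough_density[OF assms(1)] by (intro eps_le_head_tail) auto
  also have "\<dots> \<le> ((\<gamma> - 1) / 2 + 2 ^ c * ((1 + \<gamma>) / 2)) / (real ?q - 1)"
    using q head_le[OF assms(1,2)] tail_le[OF assms(1), of c]
    by (intro divide_right_mono add_mono) auto
  also have "\<dots> \<le> \<gamma> * 2 ^ c / (real ?q - 1)"
  proof (intro divide_right_mono)
    have "1 * ((\<gamma> - 1) / 2) \<le> 2 ^ c * ((\<gamma> - 1) / 2)"
      using gamma by (intro mult_right_mono) simp_all
    moreover have "2 ^ c * ((1 + \<gamma>) / 2) + 2 ^ c * ((\<gamma> - 1) / 2) = \<gamma> * (2::real) ^ c"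
      by (simp add: field_simps)
    ultimately show "(\<gamma> - 1) / 2 + 2 ^ c * ((1 + \<gamma>) / 2) \<le> \<gamma> * 2 ^ c"
      by linarith
  qed (use q in simp)
  finally show ?thesis .
qed

lemma eps_le_for_large_n:
  "\<exists>N > 0. \<forall>n m :: nat. N \<le> real n \<longrightarrow> real m = \<alpha> * real n \<longrightarrow>
     eps n m (2 ^ (m + c)) (density m) \<le> \<gamma> * 2 ^ c / (real ((2::nat) ^ (m + c)) - 1)"
proof -
  obtain M where M: "\<And>m. M \<le> m \<Longrightarrow> large_enough m"
    using eventually_large_enough unfolding eventually_at_top_linorder by blast
  show ?thesis
  proof (intro exI[of _ "max (M / \<alpha>) (real c / (1 - \<alpha>) + 1)"] conjI allI impI)
    show "0 < max (M / \<alpha>) (real c / (1 - \<alpha>) + 1)"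
      using alpha by (simp add: max.strict_coboundedI2 add_nonneg_pos)
    fix n m :: nat
    assume n: "max (M / \<alpha>) (real c / (1 - \<alpha>) + 1) \<le> real n" and m: "real m = \<alpha> * real n"
    have "M \<le> real m"
      using n m alpha by (simp add: pos_divide_le_eq mult.commute)
    moreover have "m + c < n"
    proof -
      have "real c / (1 - \<alpha>) < real n"
        using n by linarith
      hence "real c < (1 - \<alpha>) * real n"
        using alpha by (simp add: pos_divide_less_eq mult.commute)
      then show ?thesis
        using m by (simp add: algebra_simps)
    qed
    ultimately show "eps n m (2 ^ (m + c)) (density m)
        \<le> \<gamma> * 2 ^ c / (real ((2::nat) ^ (m + c)) - 1)"
      using eps_le[OF M m] by simp
  qed
qed

end

theorem lemma8:
  fixes \<alpha> :: real and c :: nat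
  assumes "0 < \<alpha>" and "\<alpha> < 1"
  shows "\<forall>\<gamma> :: real. \<forall>k :: real. \<gamma> > 1 \<longrightarrow> k \<ge> 3.6 - 5/4 * log 2 \<alpha> \<longrightarrow>
    (\<exists>N :: real. N > 0 \<and> (\<forall>n m :: nat. real n \<ge> N \<longrightarrow> real m = \<alpha> * real n \<longrightarrow>
       eps n m (2 ^ (m + c)) (k * ln (real m) / real m)
         \<le> \<gamma> * 2 ^ c / (real ((2::nat) ^ (m + c)) - 1)))"
proof (intro allI impI)
  fix \<gamma> k :: real
  assume \<gamma>: "\<gamma> > 1" and k: "k \<ge> 3.6 - 5/4 * log 2 \<alpha>"
  note threshold = entropy_threshold_lt[OF assms k]
  obtain \<theta> where \<theta>: "0 < \<theta>" "\<theta> \<le> 1" "\<theta> * (1 - ln \<alpha> - ln \<theta>) \<le> 1/8"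
    using exists_fraction_entropy_le[of "1/8" "- ln \<alpha>"] by auto
  obtain \<delta> \<epsilon> where \<delta>: "0 < \<delta>" "\<delta> \<le> 1/2" "1 < 2 * k * \<delta>" "0 < \<epsilon>"
      "\<delta> * (1 - ln \<alpha> - ln \<delta>) \<le> 1/2 - \<epsilon>"
    using exists_cutoff_fraction[of "- ln \<alpha>" k] threshold assms by auto
  interpret eps_parameters \<alpha> k \<gamma> \<theta> \<delta> \<epsilon>
    using assms \<gamma> threshold \<theta> \<delta> by unfold_locales auto
  show "\<exists>N > 0. \<forall>n m :: nat. real n \<ge> N \<longrightarrow> real m = \<alpha> * real n \<longrightarrow>
      eps n m (2 ^ (m + c)) (k * ln (real m) / real m)
        \<le> \<gamma> * 2 ^ c / (real ((2::nat) ^ (m + c)) - 1)"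
    using eps_le_for_large_n[of c] by (simp add: density_def)
qed

end
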